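(* Under the hypotheses of Theorem 4 with $k>1$ — i.e. $J\subseteq A_n$ a cyclic code with parity-check polynomial $\prod_{i=1}^t h_i$, $c(x)=\prod_{j=1}^k h_{i_j}(x)$ with every $h_{i_j}$ of degree $m_{i_j}$ and order $n_{i_j}\ne q^{m_{i_j}}-1$, $C$ the set of elements of $J$ with minimal polynomial $c$, $n_c=\mathrm{lcm}(n_{i_1},\dots,n_{i_k})$, $d_c=\gcd(q-1,n_c)$, $r_c=n_c/d_c$, $b_c=(q-1)/d_c$, $s_c$ the number of cycles in $C$ and $R_c$ the number of proportionality classes in $C$ — all vectors of $C$ have the same Hamming weight provided at least one of the following holds: (1) $s_c=b_c$; (2) $r_c=R_c$; (3) $\gcd(s_c,R_c)=1$.
   Context: Let $q>2$ be a prime power, $n\ge1$ with $\gcd(n,q)=1$, $A_n=GF(q)[x]/(x^n-1)$ with elements identified with coefficient vectors of polynomials of degree $<n$; Hamming weight = number of nonzero coefficients. $h_i$ are distinct monic irreducible polynomials; the order of $f$ with $f(0)\neq0$ is the least $e\ge1$ with $f\mid x^e-1$. Proportionality class of nonzero $z$: $\{\alpha z:\alpha\in GF(q)^*\}$; cycle: $\{x^iz:i\ge0\}$; minimal polynomial of $z$: $(x^n-1)/\gcd(z(x),x^n-1)$. *)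

theory Defs
  imports "HOL-Computational_Algebra.Computational_Algebra" "HOL-Library.Cardinality"
begin

definition xn1 :: "nat \<Rightarrow> 'a::field poly" where
  "xn1 n = monom 1 n - 1"

definition poly_ord :: "'a::field poly \<Rightarrow> nat" where
  "poly_ord f = (LEAST e. e \<ge> 1 \<and> f dvd xn1 e)"

definition hweight :: "'a::zero poly \<Rightarrow> nat" where
  "hweight z = card {i. coeff z i \<noteq> 0}"

text \<open>Cyclic code of length n with parity-check polynomial h, elements of A_n
  represented by polynomials of degree < n.\<close>
definition code_with_check :: "nat \<Rightarrow> 'a::field poly \<Rightarrow> 'a poly set" where
  "code_with_check n h = {a. degree a < n \<and> xn1 n dvd a * h}"

definition min_poly_An :: "nat \<Rightarrow> 'a::field_gcd poly \<Rightarrow> 'a poly" where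
  "min_poly_An n z = xn1 n div gcd z (xn1 n)"

definition cycle_An :: "nat \<Rightarrow> 'a::field poly \<Rightarrow> 'a poly set" where
  "cycle_An n z = {(monom 1 i * z) mod xn1 n | i. True}"

definition prop_class :: "'a::field poly \<Rightarrow> 'a poly set" where
  "prop_class z = {smult \<alpha> z | \<alpha>. \<alpha> \<noteq> 0}"

end

theory Submission
  imports Defs
begin

(*
  Let C be the set of codewords of a cyclic code with a fixed minimal polynomial c.
  The cyclic shift z \<mapsto> x z and multiplication by nonzero scalars map C to itself and
  preserve the Hamming weight.  Every cycle in C has exactly ord(c) elements, and
  ord(c) = lcm of the orders of the irreducible factors of c, which is n_c; every
  proportionality class has q - 1 elements.  Hence |C| = n_c s_c = (q - 1) R_c, and each of
  the three alternative hypotheses forces |C| = lcm(n_c, q - 1).  The orbit of any z in C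
  under shifts and scalars is itself a union of cycles and a union of proportionality
  classes, so its size is a multiple of lcm(n_c, q - 1); thus the orbit is all of C and every
  element of C has the weight of z.

  The argument only
  uses that the factors of c are distinct monic irreducible divisors of x^n - 1.
*)


lemma xn1_nonzero: "n \<ge> 1 \<Longrightarrow> xn1 n \<noteq> (0::'a::field poly)"
proof
  assume "n \<ge> 1" "xn1 n = (0::'a poly)"
  then have "coeff (xn1 n) n = (0::'a)" by simp
  with \<open>n \<ge> 1\<close> show False by (simp add: xn1_def)
qed

lemma degree_xn1: "n \<ge> 1 \<Longrightarrow> degree (xn1 n :: 'a::field poly) = n"
  unfolding xn1_def using degree_add_eq_left[of "-1" "monom (1::'a) n"]
  by (simp add: degree_monom_eq)

lemma xn1_0 [simp]: "xn1 0 = 0"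
  by (simp add: xn1_def monom_0 one_pCons)

text \<open>x^a - 1 divides x^(a m) - 1, since y - 1 divides y^m - 1.\<close>
lemma xn1_dvd_xn1_mult: "xn1 a dvd (xn1 (a * m) :: 'a::field poly)"
proof -
  have "xn1 (a * m) = (monom (1::'a) a) ^ m - 1" by (simp add: xn1_def monom_power)
  also have "\<dots> = (monom 1 a - 1) * (\<Sum>i<m. (monom 1 a) ^ i)" by (rule power_diff_1_eq)
  finally show ?thesis by (simp add: xn1_def)
qed

lemma xn1_add: "xn1 (r + s) = monom 1 r * xn1 s + (xn1 r :: 'a::field poly)"
  by (simp add: xn1_def algebra_simps mult_monom)

lemma coprime_monom_xn1: "n \<ge> 1 \<Longrightarrow> coprime (monom 1 j) (xn1 n :: 'a::field_gcd poly)"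
proof -
  assume n: "n \<ge> 1"
  have "coprime (monom 1 1) (xn1 n :: 'a poly)"
  proof (rule coprimeI)
    fix d :: "'a poly" assume d1: "d dvd monom 1 1" and d2: "d dvd xn1 n"
    have "monom (1::'a) n = monom 1 1 * monom 1 (n - 1)" using n by (simp add: mult_monom)
    then have "d dvd monom 1 n" using d1 by simp
    then have "d dvd monom 1 n - xn1 n" using d2 by (rule dvd_diff)
    then show "is_unit d" by (simp add: xn1_def)
  qed
  moreover have "monom (1::'a) j = (monom 1 1) ^ j" by (simp add: monom_power)
  ultimately show ?thesis by simp
qed


section \<open>Orders of polynomials\<close>

lemma poly_ord_basic:
  fixes h :: "'a::field poly"
  assumes "N \<ge> 1" "h dvd xn1 N"
  shows "poly_ord h > 0" and "h dvd xn1 (poly_ord h)"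
proof -
  have "poly_ord h \<ge> 1 \<and> h dvd xn1 (poly_ord h)"
    unfolding poly_ord_def by (rule LeastI[of _ N]) (use assms in auto)
  then show "poly_ord h > 0" "h dvd xn1 (poly_ord h)" by auto
qed

lemma poly_ord_dvd_iff:
  fixes h :: "'a::field poly"
  assumes "N \<ge> 1" "h dvd xn1 N"
  shows "h dvd xn1 e \<longleftrightarrow> poly_ord h dvd e"
proof -
  define o' where "o' = poly_ord h"
  have o: "o' > 0" "h dvd xn1 o'" using poly_ord_basic[OF assms] by (simp_all add: o'_def)
  have least: "o' \<le> m" if "m \<ge> 1" "h dvd xn1 m" for m
    unfolding o'_def poly_ord_def by (rule Least_le) (use that in simp)
  have h_dvd_multiple: "h dvd xn1 ((e div o') * o')"
    using o xn1_dvd_xn1_mult[of o' "e div o'"] dvd_trans by (metis mult.commute)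
  have "xn1 e = monom 1 (e mod o') * xn1 ((e div o') * o') + xn1 (e mod o')"
    using xn1_add[of "e mod o'" "(e div o') * o'"] by simp
  then have "h dvd xn1 e \<longleftrightarrow> h dvd xn1 (e mod o')"
    using h_dvd_multiple by (metis dvd_add_right_iff dvd_mult)
  also have "\<dots> \<longleftrightarrow> e mod o' = 0"
  proof -
    have "e mod o' < o'" using o by simp
    then show ?thesis using least[of "e mod o'"] by (cases "e mod o' = 0") auto
  qed
  finally show ?thesis by (simp add: o'_def dvd_eq_mod_eq_0)
qed

lemma prod_dvd_pairwise_coprime:
  fixes p :: "'b \<Rightarrow> 'a::field_gcd poly"
  assumes "finite A" "\<And>a. a \<in> A \<Longrightarrow> p a dvd x"
    "\<And>a b. a \<in> A \<Longrightarrow> b \<in> A \<Longrightarrow> a \<noteq> b \<Longrightarrow> coprime (p a) (p b)"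
  shows "prod p A dvd x"
  using assms
proof (induction A rule: finite_induct)
  case empty then show ?case by simp
next
  case (insert a A)
  have "coprime (p a) (prod p A)"
    using insert by (intro prod_coprime_right) auto
  moreover have "p a dvd x" "prod p A dvd x" using insert by auto
  ultimately show ?case using insert by (simp add: divides_mult)
qed

text \<open>The order of a product of pairwise coprime divisors of x^N - 1 is the lcm of their
  orders; this identifies ord(c) with n_c.\<close>
lemma poly_ord_prod_coprime:
  fixes p :: "'b \<Rightarrow> 'a::field_gcd poly"
  assumes N: "N \<ge> 1" and A: "finite A" and dvd: "\<And>a. a \<in> A \<Longrightarrow> p a dvd xn1 N"
    and cop: "\<And>a b. a \<in> A \<Longrightarrow> b \<in> A \<Longrightarrow> a \<noteq> b \<Longrightarrow> coprime (p a) (p b)"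
  shows "poly_ord (prod p A) = Lcm ((\<lambda>a. poly_ord (p a)) ` A)"
proof -
  have prod_dvd: "prod p A dvd xn1 N" using A dvd cop by (rule prod_dvd_pairwise_coprime)
  have "poly_ord (prod p A) dvd e \<longleftrightarrow> Lcm ((\<lambda>a. poly_ord (p a)) ` A) dvd e" for e
  proof -
    have "poly_ord (prod p A) dvd e \<longleftrightarrow> prod p A dvd xn1 e"
      by (rule poly_ord_dvd_iff[OF N prod_dvd, symmetric])
    also have "\<dots> \<longleftrightarrow> (\<forall>a\<in>A. p a dvd xn1 e)"
      using A cop prod_dvd_pairwise_coprime[of A p "xn1 e"] dvd_prodI[OF A] dvd_trans by metis
    also have "\<dots> \<longleftrightarrow> (\<forall>a\<in>A. poly_ord (p a) dvd e)"
      using poly_ord_dvd_iff[OF N dvd] by simp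
    finally show ?thesis by (simp add: Lcm_dvd_iff)
  qed
  then show ?thesis by (meson dvd_antisym dvd_refl)
qed

lemma monic_irreducible_coprime:
  fixes p q :: "'a::field_gcd poly"
  assumes "irreducible p" "irreducible q" "lead_coeff p = 1" "lead_coeff q = 1" "p \<noteq> q"
  shows "coprime p q"
proof (rule prime_elem_imp_coprime)
  show "prime_elem p" using assms by (simp add: prime_elem_iff_irreducible)
  show "\<not> p dvd q"
  proof
    assume "p dvd q"
    then obtain r where r: "q = p * r" by blast
    have "\<not> is_unit p" using assms(1) by (simp add: irreducible_def)
    then have "is_unit r" using assms(2) r by (meson irreducibleD)
    then obtain c where c: "r = [:c:]" by (metis is_unit_poly_iff)
    have "lead_coeff q = lead_coeff p * c" using r c by simp
    then have "c = 1" using assms by simp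
    then show False using r c assms(5) by simp
  qed
qed

lemma poly_ord_prod_distinct_irreducibles:
  fixes g :: "'b \<Rightarrow> 'a::field_gcd poly"
  assumes N: "N \<ge> 1" and K: "finite K" and inj: "inj_on g K"
    and irr: "\<And>j. j \<in> K \<Longrightarrow> irreducible (g j) \<and> lead_coeff (g j) = 1"
    and dvd: "\<And>j. j \<in> K \<Longrightarrow> g j dvd xn1 N"
  shows "poly_ord (prod g K) = Lcm ((\<lambda>j. poly_ord (g j)) ` K)"
proof (rule poly_ord_prod_coprime[OF N K dvd])
  fix a b assume "a \<in> K" "b \<in> K" "a \<noteq> b"
  then show "coprime (g a) (g b)"
    using irr inj by (intro monic_irreducible_coprime) (auto dest: inj_onD)
qed


section \<open>Cyclic shifts\<close>

abbreviation cshift :: "nat \<Rightarrow> nat \<Rightarrow> 'a::field poly \<Rightarrow> 'a poly" where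
  "cshift n i z \<equiv> (monom 1 i * z) mod xn1 n"

lemma cshift_cshift: "cshift n i (cshift n a z) = cshift n (i + a) z"
  by (simp add: mod_mult_right_eq mult_monom mult.assoc[symmetric])

lemma cshift_0: "n \<ge> 1 \<Longrightarrow> degree z < n \<Longrightarrow> cshift n 0 z = z"
  by (simp, intro mod_poly_less) (simp add: degree_xn1)

lemma degree_cshift: "n \<ge> 1 \<Longrightarrow> degree (cshift n i z) < n"
  using degree_mod_less[OF xn1_nonzero, of n "monom 1 i * z"] by (auto simp: degree_xn1)

lemma min_poly_dvd_xn1: "min_poly_An n z dvd xn1 n"
  unfolding min_poly_An_def by (metis dvd_def dvd_div_mult_self gcd_dvd2)

lemma min_poly_dvd_iff:
  fixes z E :: "'a::field_gcd poly"
  assumes n: "n \<ge> 1"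
  shows "xn1 n dvd E * z \<longleftrightarrow> min_poly_An n z dvd E"
proof -
  define f :: "'a poly" where "f = xn1 n"
  define g where "g = gcd z f"
  have f0: "f \<noteq> 0" using xn1_nonzero[OF n] by (simp add: f_def)
  then have g0: "g \<noteq> 0" by (simp add: g_def)
  have ff: "f = g * (f div g)" and zz: "z = g * (z div g)" by (simp_all add: g_def)
  have cop: "coprime (z div g) (f div g)"
    unfolding g_def using f0 by (intro div_gcd_coprime) simp
  have "f dvd E * z \<longleftrightarrow> g * (f div g) dvd g * (E * (z div g))"
    using ff zz by (metis mult.left_commute)
  also have "\<dots> \<longleftrightarrow> (f div g) dvd E * (z div g)" using g0 by simp
  also have "\<dots> \<longleftrightarrow> (f div g) dvd E" using cop
    by (simp add: coprime_dvd_mult_left_iff coprime_commute)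
  finally show ?thesis by (simp add: min_poly_An_def f_def g_def)
qed

lemma cshift_eq_iff:
  fixes z :: "'a::field_gcd poly"
  assumes n: "n \<ge> 1" and ji: "j \<le> i"
  shows "cshift n i z = cshift n j z \<longleftrightarrow> min_poly_An n z dvd xn1 (i - j)"
proof -
  have "monom (1::'a) i = monom 1 j * monom 1 (i - j)" using ji by (simp add: mult_monom)
  then have d: "monom 1 i * z - monom 1 j * z = monom 1 j * (xn1 (i - j) * z)"
    by (simp add: xn1_def algebra_simps)
  have "cshift n i z = cshift n j z \<longleftrightarrow> xn1 n dvd monom 1 j * (xn1 (i - j) * z)"
    unfolding d[symmetric] by (rule mod_eq_dvd_iff)
  also have "\<dots> \<longleftrightarrow> xn1 n dvd xn1 (i - j) * z"
    using coprime_monom_xn1[OF n, of j]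
      coprime_dvd_mult_right_iff[of "xn1 n" "monom 1 j" "xn1 (i - j) * z"]
    by (simp add: coprime_commute)
  also have "\<dots> \<longleftrightarrow> min_poly_An n z dvd xn1 (i - j)" by (rule min_poly_dvd_iff[OF n])
  finally show ?thesis .
qed

lemma cshift_mod_period:
  fixes z :: "'a::field_gcd poly"
  assumes n: "n \<ge> 1"
  shows "cshift n i z = cshift n (i mod poly_ord (min_poly_An n z)) z"
proof -
  define N where "N = poly_ord (min_poly_An n z)"
  have "N dvd i - i mod N" by (simp add: minus_mod_eq_mult_div)
  then have "min_poly_An n z dvd xn1 (i - i mod N)"
    by (intro poly_ord_dvd_iff[OF n min_poly_dvd_xn1, THEN iffD2]) (simp add: N_def)
  then show ?thesis using cshift_eq_iff[OF n, of "i mod N" i z] by (simp add: N_def)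
qed

text \<open>Shifting does not change the minimal polynomial, since x is a unit modulo x^n - 1.\<close>
lemma min_poly_cshift:
  fixes z :: "'a::field_gcd poly"
  assumes n: "n \<ge> 1"
  shows "min_poly_An n (cshift n i z) = min_poly_An n z"
proof -
  have "gcd (cshift n i z) (xn1 n) = gcd (monom 1 i * z) (xn1 n)"
    by (rule gcd_mod_left[OF xn1_nonzero[OF n]])
  also have "\<dots> = gcd z (xn1 n)"
    by (rule gcd_mult_left_left_cancel) (use coprime_monom_xn1[OF n, of i] in \<open>simp add: coprime_commute\<close>)
  finally show ?thesis by (simp add: min_poly_An_def)
qed

lemma min_poly_smult:
  fixes z :: "'a::field_gcd poly"
  assumes "\<alpha> \<noteq> 0"
  shows "min_poly_An n (smult \<alpha> z) = min_poly_An n z"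
proof -
  have "smult \<alpha> z = z * [:\<alpha>:]" by simp
  moreover have "is_unit [:\<alpha>:]" using assms by (simp add: is_unit_const_poly_iff dvd_field_iff)
  ultimately have "gcd (smult \<alpha> z) (xn1 n) = gcd z (xn1 n)" by (metis gcd_mult_unit1)
  then show ?thesis by (simp add: min_poly_An_def)
qed

lemma cshift_nonzero:
  fixes z :: "'a::field_gcd poly"
  assumes n: "n \<ge> 1" and dz: "degree z < n" and z0: "z \<noteq> 0"
  shows "cshift n i z \<noteq> 0"
proof
  assume "cshift n i z = 0"
  then have "xn1 n dvd monom 1 i * z" by (simp add: dvd_eq_mod_eq_0)
  then have "xn1 n dvd z"
    using coprime_monom_xn1[OF n, of i] coprime_dvd_mult_right_iff[of "xn1 n" "monom 1 i" z]
    by (simp add: coprime_commute)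
  then show False using z0 dz by (simp add: dvd_eq_mod_eq_0 mod_poly_less degree_xn1[OF n])
qed

lemma code_cshift:
  assumes "z \<in> code_with_check n H" "n \<ge> 1"
  shows "cshift n i z \<in> code_with_check n H"
proof -
  have "(cshift n i z * H) mod xn1 n = (monom 1 i * (z * H)) mod xn1 n"
    by (simp add: mod_mult_left_eq mult.assoc)
  also have "\<dots> = 0" using assms(1) by (simp add: code_with_check_def dvd_eq_mod_eq_0[symmetric])
  finally show ?thesis using degree_cshift[OF assms(2)]
    by (simp add: code_with_check_def dvd_eq_mod_eq_0)
qed

lemma code_smult: "z \<in> code_with_check n H \<Longrightarrow> smult \<alpha> z \<in> code_with_check n H"
  by (auto simp: code_with_check_def dvd_smult)


lemma hweight_smult: "\<alpha> \<noteq> 0 \<Longrightarrow> hweight (smult \<alpha> (p::'a::field poly)) = hweight p"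
  by (simp add: hweight_def)

lemma coeff_cshift1:
  fixes z :: "'a::field poly"
  assumes n: "n \<ge> 1" and dz: "degree z < n"
  shows "coeff (cshift n 1 z) j = (if j = 0 then coeff z (n - 1) else if j < n then coeff z (j - 1) else 0)"
proof -
  define c where "c = coeff z (n - 1)"
  define w where "w = monom 1 1 * z - smult c (xn1 n)"
  have cw: "coeff w j = (if j = 0 then c else if j < n then coeff z (j - 1) else 0)" for j
  proof -
    have "coeff (monom 1 1 * z) j = (if j = 0 then 0 else coeff z (j - 1))"
      by (cases j) (simp_all add: coeff_monom_mult)
    moreover have "coeff z (j - 1) = 0" if "j > n" using that dz by (intro coeff_eq_0) simp
    ultimately show ?thesis using n by (auto simp: w_def xn1_def coeff_monom c_def)
  qed
  have "degree w \<le> n - 1" by (rule degree_le) (use n in \<open>auto simp: cw\<close>)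
  then have "w mod xn1 n = w" using n by (intro mod_poly_less) (simp add: degree_xn1)
  moreover have "monom 1 1 * z = w + [:c:] * xn1 n" by (simp add: w_def)
  ultimately have "cshift n 1 z = w" by (metis mod_mult_self1)
  then show ?thesis by (simp add: cw c_def)
qed

text \<open>Rotation permutes the support, so the single shift preserves the weight.\<close>
lemma hweight_cshift1:
  fixes z :: "'a::field poly"
  assumes n: "n \<ge> 1" and dz: "degree z < n"
  shows "hweight (cshift n 1 z) = hweight z"
proof -
  let ?rot = "\<lambda>i. (i + 1) mod n"
  note cw = coeff_cshift1[OF n dz]
  have below_n: "i < n" if "coeff z i \<noteq> 0" for i
    using that dz le_degree[of z i] by fastforce
  have "{i. coeff (cshift n 1 z) i \<noteq> 0} = ?rot ` {i. coeff z i \<noteq> 0}"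
  proof (intro set_eqI iffI)
    fix j assume "j \<in> {i. coeff (cshift n 1 z) i \<noteq> 0}"
    then have j: "(if j = 0 then coeff z (n - 1) else if j < n then coeff z (j - 1) else 0) \<noteq> 0"
      unfolding mem_Collect_eq cw .
    show "j \<in> ?rot ` {i. coeff z i \<noteq> 0}"
    proof (cases "j = 0")
      case True
      then have "coeff z (n - 1) \<noteq> 0" "?rot (n - 1) = j" using j n by simp_all
      then show ?thesis by force
    next
      case False
      then have "coeff z (j - 1) \<noteq> 0" "?rot (j - 1) = j" using j by (auto split: if_splits)
      then show ?thesis by force
    qed
  next
    fix j assume "j \<in> ?rot ` {i. coeff z i \<noteq> 0}"
    then obtain i where i: "coeff z i \<noteq> 0" "j = ?rot i" by auto
    then show "j \<in> {i. coeff (cshift n 1 z) i \<noteq> 0}"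
      unfolding mem_Collect_eq cw using below_n[OF i(1)] n by (cases "i + 1 = n") auto
  qed
  moreover have "inj_on ?rot {i. coeff z i \<noteq> 0}"
  proof (rule inj_onI)
    fix a b assume "a \<in> {i. coeff z i \<noteq> 0}" "b \<in> {i. coeff z i \<noteq> 0}" "?rot a = ?rot b"
    then have "a < n" "b < n" "?rot a = ?rot b" using below_n by auto
    then show "a = b"
      by (metis Suc_eq_plus1 Suc_lessI add_right_cancel mod_less mod_self nat.distinct(1) less_irrefl)
  qed
  ultimately show ?thesis unfolding hweight_def by (simp add: card_image)
qed

lemma hweight_cshift:
  fixes z :: "'a::field poly"
  assumes n: "n \<ge> 1" and dz: "degree z < n"
  shows "hweight (cshift n i z) = hweight z"
proof (induction i)
  case 0
  then show ?case using cshift_0[OF n dz] by simp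
next
  case (Suc i)
  have "cshift n (Suc i) z = cshift n 1 (cshift n i z)" by (subst cshift_cshift) simp
  then have "hweight (cshift n (Suc i) z) = hweight (cshift n 1 (cshift n i z))" by (rule arg_cong)
  also have "\<dots> = hweight (cshift n i z)" by (rule hweight_cshift1[OF n degree_cshift[OF n]])
  also have "\<dots> = hweight z" by (rule Suc.IH)
  finally show ?case .
qed


section \<open>Cycles and proportionality classes\<close>

lemma card_cycle_An:
  fixes z :: "'a::field_gcd poly"
  assumes n: "n \<ge> 1"
  shows "card (cycle_An n z) = poly_ord (min_poly_An n z)"
proof -
  define N where "N = poly_ord (min_poly_An n z)"
  have N: "N > 0" using poly_ord_basic(1)[OF n min_poly_dvd_xn1] by (simp add: N_def)
  have "cycle_An n z = range (\<lambda>i. cshift n (i mod N) z)"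
    using cshift_mod_period[OF n, of _ z] unfolding N_def by (auto simp: cycle_An_def)
  also have "\<dots> = (\<lambda>i. cshift n i z) ` range (\<lambda>i. i mod N)" by (simp add: image_image)
  also have "\<dots> = (\<lambda>i. cshift n i z) ` {0..<N}" using N by (simp add: range_mod)
  finally have "cycle_An n z = (\<lambda>i. cshift n i z) ` {0..<N}" .
  moreover have "inj_on (\<lambda>i. cshift n i z) {0..<N}"
  proof -
    have same: "i = j" if ji: "j \<le> i" and iN: "i < N" and eq: "cshift n i z = cshift n j z" for i j
    proof (rule ccontr)
      assume "i \<noteq> j"
      have "min_poly_An n z dvd xn1 (i - j)" using eq by (rule cshift_eq_iff[OF n ji, THEN iffD1])
      then have "N dvd i - j" unfolding N_def by (rule poly_ord_dvd_iff[OF n min_poly_dvd_xn1, THEN iffD1])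
      moreover have "0 < i - j" "i - j < N" using ji iN \<open>i \<noteq> j\<close> by auto
      ultimately show False using nat_dvd_not_less by blast
    qed
    show ?thesis by (rule inj_onI) (metis atLeastLessThan_iff nat_le_linear same)
  qed
  ultimately show ?thesis by (simp add: card_image N_def)
qed

lemma cycle_An_self: "n \<ge> 1 \<Longrightarrow> degree z < n \<Longrightarrow> z \<in> cycle_An n z"
  using cshift_0[where n=n and z=z] unfolding cycle_An_def by (metis (mono_tags, lifting) mem_Collect_eq)

lemma cycle_An_of_member:
  fixes z :: "'a::field_gcd poly"
  assumes n: "n \<ge> 1" and w: "w \<in> cycle_An n z"
  shows "cycle_An n w = cycle_An n z"
proof -
  define N where "N = poly_ord (min_poly_An n z)"
  obtain a where a: "w = cshift n a z" using w by (auto simp: cycle_An_def)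
  have "cshift n i z = cshift n (i + a * (N - 1)) w" for i
  proof -
    have N: "N > 0" using poly_ord_basic(1)[OF n min_poly_dvd_xn1] by (simp add: N_def)
    have "i + a * (N - 1) + a = i + a * N" using N by (cases N) (simp_all add: algebra_simps)
    then have "cshift n (i + a * (N - 1)) w = cshift n (i + a * N) z" by (simp only: a cshift_cshift)
    also have "\<dots> = cshift n i z"
      using cshift_mod_period[OF n, of "i + a * N" z] cshift_mod_period[OF n, of i z]
      by (simp add: N_def)
    finally show ?thesis by simp
  qed
  then show ?thesis unfolding cycle_An_def by (auto simp: a cshift_cshift)
qed

lemma card_prop_class:
  fixes z :: "'a::{finite,field} poly"
  assumes "z \<noteq> 0"
  shows "card (prop_class z) = CARD('a) - 1"
proof -
  have pc: "prop_class z = (\<lambda>\<alpha>. smult \<alpha> z) ` (UNIV - {0})" by (auto simp: prop_class_def)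
  have "inj_on (\<lambda>\<alpha>. smult \<alpha> z) (UNIV - {0})"
  proof (rule inj_onI)
    fix x y assume "smult x z = smult y z"
    then have "coeff (smult x z) (degree z) = coeff (smult y z) (degree z)" by simp
    then show "x = y" using assms by simp
  qed
  then show ?thesis by (simp add: pc card_image)
qed

lemma prop_class_self: "z \<in> prop_class z"
  unfolding prop_class_def by (rule CollectI, rule exI[of _ 1]) simp

lemma prop_class_of_member:
  assumes "w \<in> prop_class z"
  shows "prop_class w = prop_class z"
proof -
  obtain \<alpha> where a: "w = smult \<alpha> z" "\<alpha> \<noteq> 0" using assms by (auto simp: prop_class_def)
  have "smult \<beta> z = smult (\<beta> / \<alpha>) w" for \<beta> using a by simp
  then have "prop_class z \<subseteq> prop_class w" using a(2) by (auto simp: prop_class_def)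
  moreover have "prop_class w \<subseteq> prop_class z" using a by (auto simp: prop_class_def)
  ultimately show ?thesis by blast
qed

lemma card_eq_class_size_times_classes:
  assumes fin: "finite S" and mem: "\<And>z. z \<in> S \<Longrightarrow> z \<in> P z" and sub: "\<And>z. z \<in> S \<Longrightarrow> P z \<subseteq> S"
    and size: "\<And>z. z \<in> S \<Longrightarrow> card (P z) = m"
    and same: "\<And>z w. z \<in> S \<Longrightarrow> w \<in> P z \<Longrightarrow> P w = P z"
  shows "card S = m * card (P ` S)"
proof -
  have U: "\<Union>(P ` S) = S" using mem sub by blast
  have "m * card (P ` S) = card (\<Union>(P ` S))"
  proof (rule card_partition)
    show "finite (P ` S)" "finite (\<Union>(P ` S))" using U fin by simp_all
    show "\<And>c. c \<in> P ` S \<Longrightarrow> card c = m" using size by auto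
    show "c1 \<inter> c2 = {}" if "c1 \<in> P ` S" "c2 \<in> P ` S" "c1 \<noteq> c2" for c1 c2
      using that same by blast
  qed
  then show ?thesis using U by simp
qed


lemma finite_polys_degree_less: "finite {p :: 'a::{finite,zero} poly. degree p < n}"
proof -
  have "{p :: 'a poly. degree p < n} \<subseteq> Poly ` {xs. length xs = n}"
  proof
    fix p :: "'a poly" assume "p \<in> {p. degree p < n}"
    then have "length (coeffs p) \<le> n" by (cases "p = 0") (auto simp: length_coeffs)
    then have "p = Poly (coeffs p @ replicate (n - length (coeffs p)) 0)
       \<and> length (coeffs p @ replicate (n - length (coeffs p)) 0) = n" by simp
    then show "p \<in> Poly ` {xs. length xs = n}" by blast
  qed
  moreover have "finite {xs :: 'a list. length xs = n}"
    using finite_lists_length_eq[of "UNIV :: 'a set" n] by simp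
  ultimately show ?thesis by (meson finite_imageI finite_subset)
qed

definition shift_scalar_closed :: "nat \<Rightarrow> 'a::field poly set \<Rightarrow> bool" where
  "shift_scalar_closed n S \<longleftrightarrow>
     (\<forall>z\<in>S. \<forall>i. cshift n i z \<in> S) \<and> (\<forall>z\<in>S. \<forall>\<alpha>. \<alpha> \<noteq> 0 \<longrightarrow> smult \<alpha> z \<in> S)"

lemma code_min_poly_closed:
  fixes H c :: "'a::field_gcd poly"
  assumes n: "n \<ge> 1"
  shows "shift_scalar_closed n {z \<in> code_with_check n H. z \<noteq> 0 \<and> min_poly_An n z = c}"
  unfolding shift_scalar_closed_def
proof (intro conjI ballI allI impI)
  fix z i assume "z \<in> {z \<in> code_with_check n H. z \<noteq> 0 \<and> min_poly_An n z = c}"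
  then have z: "z \<in> code_with_check n H" "z \<noteq> 0" "min_poly_An n z = c" by auto
  then have "degree z < n" by (simp add: code_with_check_def)
  then have "cshift n i z \<noteq> 0" by (rule cshift_nonzero[OF n _ z(2)])
  moreover have "min_poly_An n (cshift n i z) = c" using min_poly_cshift[OF n] z(3) by (rule trans)
  ultimately show "cshift n i z \<in> {z \<in> code_with_check n H. z \<noteq> 0 \<and> min_poly_An n z = c}"
    using code_cshift[OF z(1) n] by blast
next
  fix z and \<alpha> :: 'a
  assume "z \<in> {z \<in> code_with_check n H. z \<noteq> 0 \<and> min_poly_An n z = c}" and "\<alpha> \<noteq> 0"
  then show "smult \<alpha> z \<in> {z \<in> code_with_check n H. z \<noteq> 0 \<and> min_poly_An n z = c}"
    using code_smult min_poly_smult by auto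
qed

lemma card_closed_set:
  fixes S :: "'a::{finite,field_gcd} poly set"
  assumes n: "n \<ge> 1" and closed: "shift_scalar_closed n S"
    and S: "S \<subseteq> {z. z \<noteq> 0 \<and> degree z < n \<and> min_poly_An n z = c}"
  shows "card S = poly_ord c * card (cycle_An n ` S)"
    and "card S = (CARD('a) - 1) * card (prop_class ` S)"
proof -
  have fin: "finite S" using S finite_subset[OF _ finite_polys_degree_less[of n]] by blast
  show "card S = poly_ord c * card (cycle_An n ` S)"
  proof (rule card_eq_class_size_times_classes[OF fin])
    fix z assume z: "z \<in> S"
    show "z \<in> cycle_An n z" using cycle_An_self[OF n] z S by auto
    show "card (cycle_An n z) = poly_ord c" using card_cycle_An[OF n] z S by auto
    show "cycle_An n z \<subseteq> S"
      using closed z unfolding shift_scalar_closed_def cycle_An_def by auto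
    show "cycle_An n w = cycle_An n z" if "w \<in> cycle_An n z" for w
      using cycle_An_of_member[OF n that] .
  qed
  show "card S = (CARD('a) - 1) * card (prop_class ` S)"
  proof (rule card_eq_class_size_times_classes[OF fin])
    fix z assume z: "z \<in> S"
    show "z \<in> prop_class z" by (rule prop_class_self)
    show "card (prop_class z) = CARD('a) - 1" using card_prop_class z S by auto
    show "prop_class z \<subseteq> S"
      using closed z unfolding shift_scalar_closed_def prop_class_def by auto
    show "prop_class w = prop_class z" if "w \<in> prop_class z" for w
      using prop_class_of_member[OF that] .
  qed
qed


section \<open>Orbits under shifts and scalars\<close>

definition shift_scalar_orbit :: "nat \<Rightarrow> 'a::field poly \<Rightarrow> 'a poly set" where
  "shift_scalar_orbit n z = {smult \<alpha> (cshift n i z) | \<alpha> i. \<alpha> \<noteq> 0}"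

lemma shift_scalar_orbit_closed: "shift_scalar_closed n (shift_scalar_orbit n z)"
  unfolding shift_scalar_closed_def
proof (intro conjI ballI allI impI)
  fix u i assume "u \<in> shift_scalar_orbit n z"
  then obtain \<alpha> j where u: "u = smult \<alpha> (cshift n j z)" "\<alpha> \<noteq> 0"
    by (auto simp: shift_scalar_orbit_def)
  then have "cshift n i u = smult \<alpha> (cshift n (i + j) z)"
    by (simp add: mod_smult_left cshift_cshift)
  then show "cshift n i u \<in> shift_scalar_orbit n z"
    using u(2) unfolding shift_scalar_orbit_def by blast
next
  fix u and \<beta> :: 'a assume "u \<in> shift_scalar_orbit n z" and \<beta>: "\<beta> \<noteq> 0"
  then obtain \<alpha> j where u: "u = smult \<alpha> (cshift n j z)" "\<alpha> \<noteq> 0"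
    by (auto simp: shift_scalar_orbit_def)
  then have "smult \<beta> u = smult (\<beta> * \<alpha>) (cshift n j z)" "\<beta> * \<alpha> \<noteq> 0" using \<beta> by simp_all
  then show "smult \<beta> u \<in> shift_scalar_orbit n z" unfolding shift_scalar_orbit_def by blast
qed

lemma shift_scalar_orbit_subset:
  "shift_scalar_closed n S \<Longrightarrow> z \<in> S \<Longrightarrow> shift_scalar_orbit n z \<subseteq> S"
  unfolding shift_scalar_closed_def shift_scalar_orbit_def by auto

lemma shift_scalar_orbit_self: "n \<ge> 1 \<Longrightarrow> degree z < n \<Longrightarrow> z \<in> shift_scalar_orbit n z"
  unfolding shift_scalar_orbit_def using cshift_0[where n=n and z=z]
  by (intro CollectI exI[of _ 1] exI[of _ 0]) simp

lemma hweight_shift_scalar_orbit: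
  fixes z :: "'a::field poly"
  assumes n: "n \<ge> 1" and dz: "degree z < n" and w: "w \<in> shift_scalar_orbit n z"
  shows "hweight w = hweight z"
proof -
  obtain \<alpha> i where "w = smult \<alpha> (cshift n i z)" "\<alpha> \<noteq> 0"
    using w by (auto simp: shift_scalar_orbit_def)
  then have "hweight w = hweight (cshift n i z)" by (simp add: hweight_smult)
  also have "\<dots> = hweight z" by (rule hweight_cshift[OF n dz])
  finally show ?thesis .
qed

text \<open>If a closed set has only lcm(ord c, q - 1) elements it is a single orbit, because every
  orbit is itself closed and so its size is a multiple of both ord c and q - 1.\<close>
lemma orbit_eq_if_card_lcm:
  fixes S :: "'a::{finite,field_gcd} poly set"
  assumes n: "n \<ge> 1" and closed: "shift_scalar_closed n S"
    and S: "S \<subseteq> {z. z \<noteq> 0 \<and> degree z < n \<and> min_poly_An n z = c}"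
    and card: "card S = lcm (poly_ord c) (CARD('a) - 1)" and z: "z \<in> S"
  shows "shift_scalar_orbit n z = S"
proof -
  let ?O = "shift_scalar_orbit n z"
  have OS: "?O \<subseteq> S" using shift_scalar_orbit_subset[OF closed z] .
  note counts = card_closed_set[OF n shift_scalar_orbit_closed order.trans[OF OS S]]
  have "card S dvd card ?O" unfolding card using counts by (metis dvd_triv_left lcm_least)
  moreover have "finite S" using S finite_subset[OF _ finite_polys_degree_less[of n]] by blast
  moreover have "z \<in> ?O" using shift_scalar_orbit_self[OF n] z S by auto
  ultimately have "card S \<le> card ?O"
    by (metis OS card_gt_0_iff dvd_imp_le empty_iff infinite_super)
  then show ?thesis using OS \<open>finite S\<close> by (meson card_seteq)
qed


section \<open>The counting criterion\<close>

lemma eq_lcm_from_counts: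
  fixes a b N s R :: nat
  assumes a: "a > 0" and b: "b > 0" and Ns: "N = s * a" and NR: "N = R * b"
    and alt: "s = b div gcd b a \<or> a div gcd b a = R \<or> coprime s R"
  shows "N = lcm a b"
proof -
  have lcm_a: "lcm a b = a * (b div gcd b a)"
    by (simp add: lcm_nat_def gcd.commute div_mult_swap)
  have lcm_b: "lcm a b = (a div gcd b a) * b"
    by (simp add: lcm_nat_def gcd.commute dvd_div_mult)
  have "a dvd N" unfolding Ns by simp
  moreover have "b dvd N" unfolding NR by simp
  ultimately have "lcm a b dvd N" by (rule lcm_least)
  then obtain m where m: "N = lcm a b * m" by blast
  consider "s = b div gcd b a" | "a div gcd b a = R" | "coprime s R" using alt by blast
  then show ?thesis
  proof cases
    case 1 from Ns 1 lcm_a show ?thesis by (simp only: mult.commute)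
  next
    case 2 from NR 2 lcm_b show ?thesis by (simp only:)
  next
    case 3
    obtain u where u: "lcm a b = a * u" by (meson dvd_lcm1 dvdE)
    obtain v where v: "lcm a b = b * v" by (meson dvd_lcm2 dvdE)
    have "a * s = a * (u * m)" using Ns m u by algebra
    then have "m dvd s" using a by simp
    moreover have "b * R = b * (v * m)" using NR m v by algebra
    then have "m dvd R" using b by simp
    ultimately have "m = 1" using 3 by (metis coprime_common_divisor_nat)
    then show ?thesis using m by simp
  qed
qed

lemma constant_weight_criterion:
  fixes S :: "'a::{finite,field_gcd} poly set"
  assumes q: "CARD('a) > 1" and n: "n \<ge> 1" and closed: "shift_scalar_closed n S"
    and S: "S \<subseteq> {z. z \<noteq> 0 \<and> degree z < n \<and> min_poly_An n z = c}"
    and alt: "let N = poly_ord c; d = gcd (CARD('a) - 1) N;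
                  s = card (cycle_An n ` S); R = card (prop_class ` S)
              in s = (CARD('a) - 1) div d \<or> N div d = R \<or> coprime s R"
  shows "\<forall>z\<in>S. \<forall>w\<in>S. hweight z = hweight w"
proof (intro ballI)
  fix z w assume z: "z \<in> S" and w: "w \<in> S"
  have z_props: "z \<noteq> 0" "degree z < n" "min_poly_An n z = c" using z S by auto
  have "card S = lcm (poly_ord c) (CARD('a) - 1)"
  proof (rule eq_lcm_from_counts)
    show "poly_ord c > 0" using poly_ord_basic(1)[OF n min_poly_dvd_xn1[of n z]] z_props(3) by simp
    show "CARD('a) - 1 > 0" using q by simp
    show "card S = card (cycle_An n ` S) * poly_ord c"
      using card_closed_set(1)[OF n closed S] by (simp only: mult.commute)
    show "card S = card (prop_class ` S) * (CARD('a) - 1)"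
      using card_closed_set(2)[OF n closed S] by (simp only: mult.commute)
    show "card (cycle_An n ` S) = (CARD('a) - 1) div gcd (CARD('a) - 1) (poly_ord c)
        \<or> poly_ord c div gcd (CARD('a) - 1) (poly_ord c) = card (prop_class ` S)
        \<or> coprime (card (cycle_An n ` S)) (card (prop_class ` S))"
      using alt unfolding Let_def .
  qed
  then have "w \<in> shift_scalar_orbit n z" using orbit_eq_if_card_lcm[OF n closed S _ z] w by simp
  then show "hweight z = hweight w"
    using hweight_shift_scalar_orbit[OF n z_props(2)] by simp
qed


theorem corollary7:
  fixes h :: "nat \<Rightarrow> 'a::{finite,field_gcd} poly"
    and n t k :: nat and ij :: "nat \<Rightarrow> nat"
    and J C :: "'a poly set"
  assumes q_gt2: "CARD('a) > 2"
    and n_pos: "n \<ge> 1"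
    and coprime_nq: "coprime n (CARD('a))"
    and h_irred: "\<And>i. i \<in> {1..t} \<Longrightarrow> irreducible (h i) \<and> lead_coeff (h i) = 1"
    and h_dist: "inj_on h {1..t}"
    and h_dvd: "(\<Prod>i\<in>{1..t}. h i) dvd xn1 n"
    and J_def: "J = code_with_check n (\<Prod>i\<in>{1..t}. h i)"
    and k_gt1: "k > 1"
    and ij_range: "ij ` {1..k} \<subseteq> {1..t}"
    and ij_inj: "inj_on ij {1..k}"
    and non_prim: "\<And>j. j \<in> {1..k} \<Longrightarrow>
          poly_ord (h (ij j)) \<noteq> CARD('a) ^ degree (h (ij j)) - 1"
    and C_def: "C = {z \<in> J. z \<noteq> 0 \<and> min_poly_An n z = (\<Prod>j\<in>{1..k}. h (ij j))}"
  defines "n_c \<equiv> Lcm ((\<lambda>j. poly_ord (h (ij j))) ` {1..k})"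
  defines "d_c \<equiv> gcd (CARD('a) - 1) n_c"
  defines "r_c \<equiv> n_c div d_c"
  defines "b_c \<equiv> (CARD('a) - 1) div d_c"
  defines "s_c \<equiv> card (cycle_An n ` C)"
  defines "R_c \<equiv> card (prop_class ` C)"
  assumes alt: "s_c = b_c \<or> r_c = R_c \<or> coprime s_c R_c"
  shows "\<forall>z\<in>C. \<forall>w\<in>C. hweight z = hweight w"
proof -
  define c where "c = (\<Prod>j\<in>{1..k}. h (ij j))"
  have factor_dvd: "h (ij j) dvd xn1 n" if "j \<in> {1..k}" for j
    using ij_range that h_dvd by (meson dvd_prodI dvd_trans finite_atLeastAtMost image_subset_iff)
  have factor_irr: "irreducible (h (ij j)) \<and> lead_coeff (h (ij j)) = 1" if "j \<in> {1..k}" for j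
    using h_irred ij_range that by blast
  have factors_inj: "inj_on (\<lambda>j. h (ij j)) {1..k}"
    using comp_inj_on[OF ij_inj inj_on_subset[OF h_dist ij_range]] by (simp add: comp_def)
  have ord_c: "poly_ord c = n_c"
    unfolding c_def n_c_def
    by (rule poly_ord_prod_distinct_irreducibles[OF n_pos _ factors_inj factor_irr factor_dvd]) simp
  have closed: "shift_scalar_closed n C"
    using code_min_poly_closed[OF n_pos] by (simp add: C_def J_def)
  have C_sub: "C \<subseteq> {z. z \<noteq> 0 \<and> degree z < n \<and> min_poly_An n z = c}"
    by (auto simp: C_def J_def c_def code_with_check_def)
  have q: "CARD('a) > 1" using q_gt2 by simp
  show ?thesis
  proof (rule constant_weight_criterion[OF q n_pos closed C_sub])
    show "let N = poly_ord c; d = gcd (CARD('a) - 1) N;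
            s = card (cycle_An n ` C); R = card (prop_class ` C)
          in s = (CARD('a) - 1) div d \<or> N div d = R \<or> coprime s R"
      using alt unfolding ord_c Let_def s_c_def R_c_def b_c_def r_c_def d_c_def .
  qed
qed

end
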